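(* Let $\langle R,<,+,\cdot\rangle$ be an ordered field, and let $E\subseteq R^2\times R^2$ be the relation $E(x,y,a,b)\iff y=ax+b$. Let $m\in R_{\ge0}$. Then $|E\cap B|=\Omega(n^{4/3})$ for finite $m$-distant $n$-grids $B\subseteq R^2\times R^2$; that is, there is a constant $c>0$ such that for arbitrarily large $n\in\mathbb N$ there is an $m$-distant $n$-grid $B=B_1\times B_2\subseteq R^2\times R^2$ with $|E\cap B|\ge c\,n^{4/3}$.
   Context: For $x\in R^2$, $|x|=\max(|x_1|,|x_2|)$. A set $X\subseteq R^2$ is $m$-distant if $|x-y|>m$ for all distinct $x,y\in X$. An $n$-grid in $R^2\times R^2$ is $B=B_1\times B_2$ with $B_1,B_2\subseteq R^2$ and $|B_1|=|B_2|=n$; it is $m$-distant if $B_1$ and $B_2$ are $m$-distant. *)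

theory Defs
  imports Complex_Main
begin

definition maxnorm :: "'a::linordered_field \<times> 'a \<Rightarrow> 'a" where
  "maxnorm x = max \<bar>fst x\<bar> \<bar>snd x\<bar>"

definition m_distant :: "'a::linordered_field \<Rightarrow> ('a \<times> 'a) set \<Rightarrow> bool" where
  "m_distant m X \<longleftrightarrow> (\<forall>x\<in>X. \<forall>y\<in>X. x \<noteq> y \<longrightarrow> maxnorm (fst x - fst y, snd x - snd y) > m)"

definition Erel :: "(('a::linordered_field \<times> 'a) \<times> ('a \<times> 'a)) set" where
  "Erel = {((x, y), (a, b)). y = a * x + b}"

end

theory Submission
  imports Defs
begin

text \<open>The grid is the lattice box \<open>{1..k} \<times> {1..2k\<^sup>2}\<close> with the first coordinate scaled by
  \<open>D = m + 1\<close> and the second by \<open>D\<^sup>2\<close>, so it has \<open>n = 2k\<^sup>3\<close> points and is \<open>m\<close>-distant.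
  Taking the same set for points and for lines \<open>(a, b)\<close>, every triple \<open>(x, j, l)\<close> in
  \<open>{1..k} \<times> {1..k} \<times> {1..k\<^sup>2}\<close> yields the incidence of the point \<open>(x, jx + l)\<close> with the
  line \<open>(j, l)\<close>, and \<open>k\<^sup>4 \<ge> n\<^bsup>4/3\<^esup>/16\<close> because \<open>n \<le> (2k)\<^sup>3\<close>.\<close>

definition scaled_lattice_point :: "'a::linordered_field \<Rightarrow> nat \<times> nat \<Rightarrow> 'a \<times> 'a" where
  "scaled_lattice_point D p = (of_nat (fst p) * D, of_nat (snd p) * D\<^sup>2)"

definition scaled_lattice_box :: "'a::linordered_field \<Rightarrow> nat \<Rightarrow> nat \<Rightarrow> ('a \<times> 'a) set" where
  "scaled_lattice_box D a b = scaled_lattice_point D ` ({1..a} \<times> {1..b})"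

lemma abs_of_nat_diff_ge_one:
  assumes "i \<noteq> j"
  shows "(1::'a::linordered_idom) \<le> \<bar>of_nat i - of_nat j\<bar>"
proof -
  have "(1::int) \<le> \<bar>int i - int j\<bar>" using assms by auto
  then have "(1::'a) \<le> of_int \<bar>int i - int j\<bar>" by (metis of_int_1_le_iff)
  then show ?thesis by simp
qed

lemma abs_of_nat_mult_diff_ge:
  fixes D :: "'a::linordered_idom"
  assumes "i \<noteq> j" "0 \<le> D"
  shows "D \<le> \<bar>of_nat i * D - of_nat j * D\<bar>"
proof -
  have "1 * D \<le> \<bar>of_nat i - of_nat j\<bar> * D"
    using abs_of_nat_diff_ge_one[OF assms(1)] assms(2) by (intro mult_right_mono)
  then show ?thesis by (simp add: left_diff_distrib[symmetric] abs_mult assms(2))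
qed

lemma inj_scaled_lattice_point:
  fixes D :: "'a::linordered_field"
  assumes "D \<noteq> 0"
  shows "inj (scaled_lattice_point D)"
  using assms by (intro injI) (auto simp: scaled_lattice_point_def prod_eq_iff)

lemma card_scaled_lattice_box:
  fixes D :: "'a::linordered_field"
  assumes "D \<noteq> 0"
  shows "card (scaled_lattice_box D a b) = a * b"
  unfolding scaled_lattice_box_def
  using inj_scaled_lattice_point[OF assms]
  by (simp add: card_image inj_on_subset card_cartesian_product)

lemma m_distant_scaled_lattice_box:
  fixes D :: "'a::linordered_field"
  assumes "m < D" "1 \<le> D"
  shows "m_distant m (scaled_lattice_box D a b)"
  unfolding m_distant_def scaled_lattice_box_def
proof (intro ballI impI)
  fix x y assume "x \<in> scaled_lattice_point D ` ({1..a} \<times> {1..b})"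
    "y \<in> scaled_lattice_point D ` ({1..a} \<times> {1..b})" "x \<noteq> y"
  then obtain i l i' l' where x: "x = scaled_lattice_point D (i, l)"
    and y: "y = scaled_lattice_point D (i', l')" and ne: "(i, l) \<noteq> (i', l')"
    by auto
  have "D \<le> D\<^sup>2" using assms(2) by (simp add: power2_eq_square)
  show "m < maxnorm (fst x - fst y, snd x - snd y)"
  proof (cases "i = i'")
    case False
    then have "D \<le> \<bar>of_nat i * D - of_nat i' * D\<bar>"
      using assms(2) by (intro abs_of_nat_mult_diff_ge) auto
    then show ?thesis
      using assms(1) by (auto simp: maxnorm_def x y scaled_lattice_point_def)
  next
    case True
    then have "D\<^sup>2 \<le> \<bar>of_nat l * D\<^sup>2 - of_nat l' * D\<^sup>2\<bar>"
      using ne by (intro abs_of_nat_mult_diff_ge) auto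
    then show ?thesis
      using assms(1) \<open>D \<le> D\<^sup>2\<close> by (auto simp: maxnorm_def x y scaled_lattice_point_def)
  qed
qed

text \<open>The second coordinate is scaled by \<open>D\<^sup>2\<close> so that the scale factors agree on both
  sides of \<open>y = a x + b\<close>.\<close>
lemma scaled_lattice_point_in_Erel:
  "(scaled_lattice_point D (x, j * x + l), scaled_lattice_point D (j, l)) \<in> Erel"
  by (simp add: Erel_def scaled_lattice_point_def algebra_simps power2_eq_square)

lemma incidences_scaled_lattice_box:
  fixes D :: "'a::linordered_field" and k :: nat
  assumes "D \<noteq> 0"
  defines "G \<equiv> scaled_lattice_box D k (2 * k\<^sup>2)"
  shows "k ^ 4 \<le> card (Erel \<inter> (G \<times> G))"
proof -
  let ?p = "scaled_lattice_point D"
  define T where "T = {1..k} \<times> {1..k} \<times> {1..k\<^sup>2}"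
  define g where "g = (\<lambda>(x, j, l). (?p (x, j * x + l), ?p (j, l)))"
  have inj_p: "inj ?p" using inj_scaled_lattice_point[OF assms(1)] .
  have "inj_on g T"
  proof (rule inj_onI)
    fix u v assume "g u = g v"
    then show "u = v"
      using inj_p by (cases u; cases v) (auto simp: g_def dest: injD)
  qed
  then have "card (g ` T) = k ^ 4"
    by (simp add: card_image T_def card_cartesian_product power2_eq_square power4_eq_xxxx)
  moreover have "g ` T \<subseteq> Erel \<inter> (G \<times> G)"
  proof
    fix z assume "z \<in> g ` T"
    then obtain x j l where xjl: "x \<in> {1..k}" "j \<in> {1..k}" "l \<in> {1..k\<^sup>2}"
      and z: "z = g (x, j, l)" by (auto simp: T_def)
    have "j * x \<le> k\<^sup>2" using xjl by (simp add: power2_eq_square mult_le_mono)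
    then have "(x, j * x + l) \<in> {1..k} \<times> {1..2 * k\<^sup>2}" "(j, l) \<in> {1..k} \<times> {1..2 * k\<^sup>2}"
      using xjl by auto
    then show "z \<in> Erel \<inter> (G \<times> G)"
      by (auto simp: z g_def G_def scaled_lattice_box_def scaled_lattice_point_in_Erel)
  qed
  moreover have "finite (Erel \<inter> (G \<times> G))" by (simp add: G_def scaled_lattice_box_def)
  ultimately show ?thesis by (metis card_mono)
qed

lemma powr_divide_le_power:
  fixes x t :: real
  assumes "0 < x" "0 \<le> t" "x \<le> t ^ p" "p > 0"
  shows "x powr (real q / real p) \<le> t ^ q"
proof -
  have "x powr (1 / real p) \<le> (t ^ p) powr (1 / real p)"
    using assms by (intro powr_mono2) auto
  also have "\<dots> = t"
    using assms(2,4) by (cases "t = 0") (simp_all add: powr_realpow[symmetric] powr_powr)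
  finally have "x powr (1 / real p) \<le> t" .
  then have "(x powr (1 / real p)) ^ q \<le> t ^ q" by (intro power_mono) auto
  moreover have "(x powr (1 / real p)) ^ q = x powr (real q / real p)"
    using assms(1) by (simp add: powr_realpow[symmetric] powr_powr)
  ultimately show ?thesis by simp
qed

theorem proposition3p15:
  fixes m :: "'a::linordered_field"
  assumes "m \<ge> 0"
  shows "\<exists>c::real. c > 0 \<and>
    (\<forall>N::nat. \<exists>n\<ge>N. \<exists>B1 B2 :: ('a \<times> 'a) set.
       finite B1 \<and> finite B2 \<and> card B1 = n \<and> card B2 = n \<and>
       m_distant m B1 \<and> m_distant m B2 \<and>
       real (card (Erel \<inter> (B1 \<times> B2))) \<ge> c * real n powr (4/3))"
proof (intro exI[of _ "1/16"] conjI allI)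
  fix N :: nat
  define k where "k = N + 1"
  define G where "G = scaled_lattice_box (m + 1) k (2 * k\<^sup>2)"
  have card_G: "card G = 2 * k ^ 3"
    using assms by (simp add: G_def card_scaled_lattice_box power2_eq_square power3_eq_cube)
  have "N \<le> 2 * k ^ 3" using self_le_power[of k 3] by (simp add: k_def)
  moreover have "finite G" by (simp add: G_def scaled_lattice_box_def)
  moreover have "m_distant m G"
    using assms by (simp add: G_def m_distant_scaled_lattice_box)
  moreover have "1/16 * real (2 * k ^ 3) powr (4/3) \<le> real (card (Erel \<inter> (G \<times> G)))"
  proof -
    have "real (2 * k ^ 3) \<le> (2 * real k) ^ 3" by (simp add: power_mult_distrib)
    then have "real (2 * k ^ 3) powr (real 4 / real 3) \<le> (2 * real k) ^ 4"
      by (intro powr_divide_le_power) (auto simp: k_def)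
    also have "\<dots> = 16 * real (k ^ 4)" by simp
    also have "k ^ 4 \<le> card (Erel \<inter> (G \<times> G))"
      using assms unfolding G_def by (intro incidences_scaled_lattice_box) simp
    finally show ?thesis by simp
  qed
  ultimately show "\<exists>n\<ge>N. \<exists>B1 B2 :: ('a \<times> 'a) set.
       finite B1 \<and> finite B2 \<and> card B1 = n \<and> card B2 = n \<and>
       m_distant m B1 \<and> m_distant m B2 \<and>
       real (card (Erel \<inter> (B1 \<times> B2))) \<ge> 1/16 * real n powr (4/3)"
    using card_G by blast
qed simp

end
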